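(* Fix a rooted phylogenetic tree $T$ with root $\rho$, leaf set $[n]$, and edge set $E$. Let $\mathcal{G}_T=\{PD_{T,l}: l\in\mathbb{R}_{\ge 0}^E\}$ be the class of cooperative games on the player set $[n]$ induced by $T$ with non-negative edge lengths. This class is closed under addition, since $PD_{T,l_1}+PD_{T,l_2}=PD_{T,l_1+l_2}$. A value on $\mathcal{G}_T$ is a map $\psi$ assigning to each $\nu\in\mathcal{G}_T$ a function $\psi_\nu:[n]\to\mathbb{R}$. Consider the following axioms: 1. Efficiency: $\sum_{i\in[n]}\psi_\nu(i)=\nu([n])$. 2. Symmetry: if $i\ne j$ and $\nu(C\cup\{i\})=\nu(C\cup\{j\})$ for all $C\subseteq[n]\setminus\{i,j\}$, then $\psi_\nu(i)=\psi_\nu(j)$. 3. Dummy: if $\nu(C\cup\{i\})=\nu(C)$ for all $C\subseteq[n]\setminus\{i\}$, then $\psi_\nu(i)=0$. 4. Additivity: $\psi_{\nu_1+\nu_2}(i)=\psi_{\nu_1}(i)+\psi_{\nu_2}(i)$ for all $\nu_1,\nu_2\in\mathcal{G}_T$ and all $i$. Then there is exactly one value $\psi$ on $\mathcal{G}_T$ satisfying Axioms 1–4, and it is the Shapley value: $$\psi_\nu(i)=\frac{1}{n!}\sum_{S\subseteq[n]:\,i\in S}(|S|-1)!\,(n-|S|)!\,\big(\nu(S)-\nu(S\setminus\{i\})\big).$$ Equivalently, for $\nu=PD_{T,l}$, $\psi_\nu(i)=\sum_{e\in P(T;\rho,i)} l(e)/n(e)$ (the Fair Proportion index).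
   Context: A rooted phylogenetic tree on $[n]$ is a rooted tree with leaf set $[n]$ whose non-leaf vertices are unlabelled and have out-degree at least 2. For edge lengths $l\ge 0$ and $S\subseteq[n]$, the phylogenetic diversity $PD_{T,l}(S)$ is the sum of the lengths of the edges of the minimal subtree of $T$ containing $S\cup\{\rho\}$, with $PD_{T,l}(\emptyset)=0$. $n(e)$ is the number of leaves descended from edge $e$, and $P(T;\rho,i)$ is the path from $\rho$ to leaf $i$. *)

theory Defs
  imports Main "HOL-Analysis.Analysis"
begin

text \<open>A rooted tree is encoded by a finite vertex set V (vertices are natural numbers),
a root r and a parent function; the edge of a non-root vertex v is the edge
(parent v, v), so edges are identified with the non-root vertices.\<close>

definition rooted_tree :: "nat set \<Rightarrow> nat \<Rightarrow> (nat \<Rightarrow> nat) \<Rightarrow> bool" where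
  "rooted_tree V r par \<longleftrightarrow> finite V \<and> r \<in> V \<and> par r = r \<and>
     (\<forall>v\<in>V. par v \<in> V) \<and> (\<forall>v\<in>V. \<exists>k. (par ^^ k) v = r)"

definition tree_edges :: "nat set \<Rightarrow> nat \<Rightarrow> nat set" where
  "tree_edges V r = V - {r}"

definition children :: "nat set \<Rightarrow> nat \<Rightarrow> (nat \<Rightarrow> nat) \<Rightarrow> nat \<Rightarrow> nat set" where
  "children V r par v = {c \<in> V - {r}. par c = v}"

definition tree_leaves :: "nat set \<Rightarrow> nat \<Rightarrow> (nat \<Rightarrow> nat) \<Rightarrow> nat set" where
  "tree_leaves V r par = {v \<in> V. children V r par v = {}}"

definition phylo_tree :: "nat set \<Rightarrow> nat \<Rightarrow> (nat \<Rightarrow> nat) \<Rightarrow> nat \<Rightarrow> bool" where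
  "phylo_tree V r par n \<longleftrightarrow> rooted_tree V r par \<and> tree_leaves V r par = {1..n} \<and>
     (\<forall>v \<in> V - tree_leaves V r par. card (children V r par v) \<ge> 2)"

definition is_anc :: "(nat \<Rightarrow> nat) \<Rightarrow> nat \<Rightarrow> nat \<Rightarrow> bool" where
  "is_anc par u v \<longleftrightarrow> (\<exists>k. (par ^^ k) v = u)"

definition root_path :: "nat set \<Rightarrow> nat \<Rightarrow> (nat \<Rightarrow> nat) \<Rightarrow> nat \<Rightarrow> nat set" where
  "root_path V r par i = {e \<in> tree_edges V r. is_anc par e i}"

definition n_desc :: "nat set \<Rightarrow> nat \<Rightarrow> (nat \<Rightarrow> nat) \<Rightarrow> nat \<Rightarrow> nat" where
  "n_desc V r par e = card {i \<in> tree_leaves V r par. is_anc par e i}"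

text \<open>Phylogenetic diversity: total length of the edges of the minimal subtree
spanning S and the root, i.e. the union of the root-to-leaf paths for leaves in S.\<close>
definition PD :: "nat set \<Rightarrow> nat \<Rightarrow> (nat \<Rightarrow> nat) \<Rightarrow> (nat \<Rightarrow> real) \<Rightarrow> nat set \<Rightarrow> real" where
  "PD V r par l S = (\<Sum>e \<in> (\<Union>i\<in>S. root_path V r par i). l e)"

definition PD_games :: "nat set \<Rightarrow> nat \<Rightarrow> (nat \<Rightarrow> nat) \<Rightarrow> (nat set \<Rightarrow> real) set" where
  "PD_games V r par = {PD V r par l | l. \<forall>e \<in> tree_edges V r. l e \<ge> 0}"

definition shapley :: "nat \<Rightarrow> (nat set \<Rightarrow> real) \<Rightarrow> nat \<Rightarrow> real" where
  "shapley n \<nu> i = (1 / fact n) *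
     (\<Sum>S \<in> {S. S \<subseteq> {1..n} \<and> i \<in> S}.
        fact (card S - 1) * fact (n - card S) * (\<nu> S - \<nu> (S - {i})))"

definition value_axioms :: "nat \<Rightarrow> (nat set \<Rightarrow> real) set \<Rightarrow> ((nat set \<Rightarrow> real) \<Rightarrow> nat \<Rightarrow> real) \<Rightarrow> bool" where
  "value_axioms n G \<psi> \<longleftrightarrow>
     (\<forall>\<nu>\<in>G. (\<Sum>i\<in>{1..n}. \<psi> \<nu> i) = \<nu> {1..n}) \<and>
     (\<forall>\<nu>\<in>G. \<forall>i\<in>{1..n}. \<forall>j\<in>{1..n}. i \<noteq> j \<longrightarrow>
        (\<forall>C. C \<subseteq> {1..n} - {i, j} \<longrightarrow> \<nu> (C \<union> {i}) = \<nu> (C \<union> {j})) \<longrightarrow> \<psi> \<nu> i = \<psi> \<nu> j) \<and>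
     (\<forall>\<nu>\<in>G. \<forall>i\<in>{1..n}.
        (\<forall>C. C \<subseteq> {1..n} - {i} \<longrightarrow> \<nu> (C \<union> {i}) = \<nu> C) \<longrightarrow> \<psi> \<nu> i = 0) \<and>
     (\<forall>\<nu>1\<in>G. \<forall>\<nu>2\<in>G. \<forall>i\<in>{1..n}.
        \<psi> (\<lambda>S. \<nu>1 S + \<nu>2 S) i = \<psi> \<nu>1 i + \<psi> \<nu>2 i)"

end

theory Submission
  imports Defs "HOL-Combinatorics.Transposition"
begin

text \<open>By additivity, the value of a PD game is the sum over the edges e of the values of the
single-edge games, which pay l(e) to every coalition containing a leaf below e. In such a game the
leaves not below e are dummies, the leaves below e are pairwise symmetric, and efficiency
distributes l(e) among them, so each gets l(e)/n(e): any value satisfying the axioms is the Fair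
Proportion index. The Shapley value satisfies the axioms on every game vanishing on the empty
coalition, hence it is this unique value.\<close>

lemma sum_subsets_containing:
  fixes f :: "'a set \<Rightarrow> 'b::semiring_1"
  assumes "finite N"
  shows "(\<Sum>i\<in>N. \<Sum>S | S \<subseteq> N \<and> i \<in> S. f S) = (\<Sum>S\<in>Pow N. of_nat (card S) * f S)"
proof -
  have "(\<Sum>i\<in>N. \<Sum>S | S \<subseteq> N \<and> i \<in> S. f S) = (\<Sum>i\<in>N. \<Sum>S | S \<in> Pow N \<and> i \<in> S. f S)"
    by simp
  also have "\<dots> = (\<Sum>S\<in>Pow N. \<Sum>i | i \<in> N \<and> i \<in> S. f S)"
    using assms by (intro sum.swap_restrict) auto
  also have "\<dots> = (\<Sum>S\<in>Pow N. of_nat (card S) * f S)"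
    by (intro sum.cong refl) (simp add: Int_absorb1 Collect_conj_eq[symmetric] Int_def[symmetric])
  finally show ?thesis .
qed

lemma sum_subsets_containing_remove:
  fixes g :: "nat \<Rightarrow> 'a set \<Rightarrow> 'b::semiring_1"
  assumes "finite N"
  shows "(\<Sum>i\<in>N. \<Sum>S | S \<subseteq> N \<and> i \<in> S. g (card S) (S - {i}))
       = (\<Sum>T\<in>Pow N. of_nat (card N - card T) * g (card T + 1) T)"
proof -
  have "(\<Sum>S | S \<subseteq> N \<and> i \<in> S. g (card S) (S - {i})) = (\<Sum>T | T \<in> Pow N \<and> i \<notin> T. g (card T + 1) T)"
    if "i \<in> N" for i
  proof (rule sum.reindex_bij_witness[where i="insert i" and j="\<lambda>S. S - {i}"])
    fix S assume S: "S \<in> {S. S \<subseteq> N \<and> i \<in> S}"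
    then have "card S > 0" using assms finite_subset card_gt_0_iff by blast
    with S show "g (card (S - {i}) + 1) (S - {i}) = g (card S) (S - {i})"
      by simp
  qed (use that in auto)
  then have "(\<Sum>i\<in>N. \<Sum>S | S \<subseteq> N \<and> i \<in> S. g (card S) (S - {i}))
      = (\<Sum>i\<in>N. \<Sum>T | T \<in> Pow N \<and> i \<notin> T. g (card T + 1) T)"
    by (rule sum.cong[OF refl])
  also have "\<dots> = (\<Sum>T\<in>Pow N. \<Sum>i | i \<in> N \<and> i \<notin> T. g (card T + 1) T)"
    using assms by (intro sum.swap_restrict) auto
  also have "\<dots> = (\<Sum>T\<in>Pow N. of_nat (card N - card T) * g (card T + 1) T)"
  proof (intro sum.cong refl)
    fix T assume "T \<in> Pow N"
    then have "card {i. i \<in> N \<and> i \<notin> T} = card N - card T"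
      using assms by (simp add: set_diff_eq[symmetric] card_Diff_subset finite_subset)
    then show "(\<Sum>i | i \<in> N \<and> i \<notin> T. g (card T + 1) T) = of_nat (card N - card T) * g (card T + 1) T"
      by simp
  qed
  finally show ?thesis .
qed

lemma shapley_weight_telescope:
  assumes "k \<le> n"
  shows "real k * (fact (k - 1) * fact (n - k)) - real (n - k) * (fact k * fact (n - Suc k))
       = (if k = n then fact n else 0) - (if k = 0 then fact n else 0)"
proof -
  have up: "real k * fact (k - 1) = (if k = 0 then 0 else fact k)"
    by (cases k) auto
  have down: "real (n - k) * fact (n - Suc k) = (if k = n then 0 else fact (n - k))"
  proof (cases "k = n")
    case False
    with assms have "n - k = Suc (n - Suc k)" by arith
    then show ?thesis by (simp add: False)
  qed simp
  have "real k * (fact (k - 1) * fact (n - k)) - real (n - k) * (fact k * fact (n - Suc k))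
      = (real k * fact (k - 1)) * fact (n - k) - fact k * (real (n - k) * fact (n - Suc k))"
    by (simp only: mult.assoc mult.left_commute)
  also have "\<dots> = (if k = 0 then 0 else fact k) * fact (n - k) - fact k * (if k = n then 0 else fact (n - k))"
    by (simp only: up down)
  finally show ?thesis
    by (cases "k = 0"; cases "k = n") simp_all
qed

lemma shapley_efficient: "(\<Sum>i\<in>{1..n}. shapley n \<nu> i) = \<nu> {1..n} - \<nu> {}"
proof -
  define N where "N = {1..n::nat}"
  define w where "w k = (fact (k - 1) * fact (n - k) :: real)" for k
  have N: "finite N" "card N = n" by (simp_all add: N_def)
  \<comment> \<open>Regrouped by coalition T, the weights telescope: T enters with weight |T| w(|T|) as a
    coalition S and with weight -(n - |T|) w(|T| + 1) as some S - {i}; these cancel unless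
    T = N or T = {}.\<close>
  have coef: "real (card T) * w (card T) - real (n - card T) * w (card T + 1)
      = (if T = N then fact n else 0) - (if T = {} then fact n else 0)" if "T \<in> Pow N" for T
  proof -
    have "card T \<le> n" "card T = n \<longleftrightarrow> T = N" "card T = 0 \<longleftrightarrow> T = {}"
      using that N card_subset_eq[of N T] by (auto simp: card_mono finite_subset)
    with shapley_weight_telescope[of "card T" n] show ?thesis
      by (simp add: w_def)
  qed
  have "shapley n \<nu> i * fact n = (\<Sum>S | S \<subseteq> N \<and> i \<in> S. w (card S) * \<nu> S)
      - (\<Sum>S | S \<subseteq> N \<and> i \<in> S. w (card S) * \<nu> (S - {i}))" for i
    by (simp add: shapley_def N_def w_def right_diff_distrib sum_subtractf diff_divide_distrib[symmetric])
  then have "(\<Sum>i\<in>N. shapley n \<nu> i) * fact n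
      = (\<Sum>i\<in>N. \<Sum>S | S \<subseteq> N \<and> i \<in> S. w (card S) * \<nu> S)
      - (\<Sum>i\<in>N. \<Sum>S | S \<subseteq> N \<and> i \<in> S. w (card S) * \<nu> (S - {i}))"
    by (simp add: sum_distrib_right sum_subtractf)
  also have "\<dots> = (\<Sum>T\<in>Pow N. real (card T) * (w (card T) * \<nu> T))
      - (\<Sum>T\<in>Pow N. real (n - card T) * (w (card T + 1) * \<nu> T))"
    using sum_subsets_containing[OF N(1), of "\<lambda>S. w (card S) * \<nu> S"]
      sum_subsets_containing_remove[OF N(1), of "\<lambda>k S. w k * \<nu> S"]
    by (simp only: N(2) of_nat_id)
  also have "\<dots> = (\<Sum>T\<in>Pow N. ((if T = N then fact n else 0) - (if T = {} then fact n else 0)) * \<nu> T)"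
    unfolding sum_subtractf[symmetric]
  proof (intro sum.cong refl)
    fix T assume "T \<in> Pow N"
    then show "real (card T) * (w (card T) * \<nu> T) - real (n - card T) * (w (card T + 1) * \<nu> T)
        = ((if T = N then fact n else 0) - (if T = {} then fact n else 0)) * \<nu> T"
      unfolding coef[OF \<open>T \<in> Pow N\<close>, symmetric] by (simp only: mult.assoc left_diff_distrib)
  qed
  also have "\<dots> = (\<Sum>T\<in>Pow N. (if T = N then fact n * \<nu> T else 0) - (if T = {} then fact n * \<nu> T else 0))"
    by (intro sum.cong) (auto simp: left_diff_distrib)
  also have "\<dots> = (\<nu> N - \<nu> {}) * fact n"
    using N(1) by (simp add: sum_subtractf algebra_simps)
  finally show ?thesis
    by (simp add: N_def)
qed

lemma shapley_add: "shapley n (\<lambda>S. \<nu>1 S + \<nu>2 S) i = shapley n \<nu>1 i + shapley n \<nu>2 i"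
  unfolding shapley_def distrib_left[symmetric] sum.distrib[symmetric]
  by (intro arg_cong[where f="\<lambda>x. (1 / fact n) * x"] sum.cong refl) (simp add: algebra_simps)

lemma shapley_dummy:
  assumes "\<forall>C. C \<subseteq> {1..n} - {i} \<longrightarrow> \<nu> (C \<union> {i}) = \<nu> C"
  shows "shapley n \<nu> i = 0"
proof -
  have "\<nu> S = \<nu> (S - {i})" if "S \<subseteq> {1..n}" "i \<in> S" for S
    using assms[rule_format, of "S - {i}"] that by (auto simp: insert_absorb)
  then show ?thesis
    by (simp add: shapley_def)
qed

lemma transpose_image_invariant_game:
  assumes symm: "\<forall>C. C \<subseteq> N - {i, j} \<longrightarrow> \<nu> (C \<union> {i}) = \<nu> (C \<union> {j})" and "S \<subseteq> N"
  shows "\<nu> (Transposition.transpose i j ` S) = \<nu> S"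
proof -
  consider "i \<in> S \<longleftrightarrow> j \<in> S" | "i \<in> S" "j \<notin> S" | "i \<notin> S" "j \<in> S"
    by blast
  then show ?thesis
  proof cases
    case 2
    define C where "C = S - {i}"
    have "C \<subseteq> N - {i, j}" "S = C \<union> {i}"
      using 2 \<open>S \<subseteq> N\<close> by (auto simp: C_def)
    moreover from this have "Transposition.transpose i j ` S = C \<union> {j}"
      by (auto simp: subset_iff)
    ultimately show ?thesis
      using symm by metis
  next
    case 3
    define C where "C = S - {j}"
    have "C \<subseteq> N - {i, j}" "S = C \<union> {j}"
      using 3 \<open>S \<subseteq> N\<close> by (auto simp: C_def)
    moreover from this have "Transposition.transpose i j ` S = C \<union> {i}"
      by (auto simp: subset_iff)
    ultimately show ?thesis
      using symm by metis
  qed simp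
qed

lemma shapley_symmetric:
  assumes "i \<in> {1..n}" "j \<in> {1..n}"
    and "\<forall>C. C \<subseteq> {1..n} - {i, j} \<longrightarrow> \<nu> (C \<union> {i}) = \<nu> (C \<union> {j})"
  shows "shapley n \<nu> i = shapley n \<nu> j"
proof -
  let ?t = "Transposition.transpose i j"
  have into: "?t ` S \<subseteq> {1..n}" if "S \<subseteq> {1..n}" for S
    using image_mono[OF that, of ?t] assms(1,2) by simp
  have "(\<Sum>S | S \<subseteq> {1..n} \<and> j \<in> S. fact (card S - 1) * fact (n - card S) * (\<nu> S - \<nu> (S - {j})))
      = (\<Sum>S | S \<subseteq> {1..n} \<and> i \<in> S. fact (card S - 1) * fact (n - card S) * (\<nu> S - \<nu> (S - {i})))"
  proof (rule sum.reindex_bij_witness[where i="image ?t" and j="image ?t"])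
    fix S assume S: "S \<in> {S. S \<subseteq> {1..n} \<and> j \<in> S}"
    have "?t ` S - {i} = ?t ` (S - {j})"
      by (simp add: image_set_diff inj_transpose)
    moreover have "card (?t ` S) = card S"
      by (simp add: card_image)
    moreover have "\<nu> (?t ` S) = \<nu> S" "\<nu> (?t ` (S - {j})) = \<nu> (S - {j})"
      using S by (auto intro!: transpose_image_invariant_game[OF assms(3)])
    ultimately show "fact (card (?t ` S) - 1) * fact (n - card (?t ` S)) * (\<nu> (?t ` S) - \<nu> (?t ` S - {i}))
        = fact (card S - 1) * fact (n - card S) * (\<nu> S - \<nu> (S - {j}))"
      by simp
  next
    fix S assume "S \<in> {S. S \<subseteq> {1..n} \<and> j \<in> S}"
    then show "?t ` S \<in> {S. S \<subseteq> {1..n} \<and> i \<in> S}"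
      using into by (auto intro: image_eqI[of i ?t j])
  next
    fix S assume "S \<in> {S. S \<subseteq> {1..n} \<and> i \<in> S}"
    then show "?t ` S \<in> {S. S \<subseteq> {1..n} \<and> j \<in> S}"
      using into by (auto intro: image_eqI[of j ?t i])
  qed (simp_all add: image_image)
  then show ?thesis
    by (simp add: shapley_def)
qed

lemma shapley_value_axioms:
  assumes "\<forall>\<nu>\<in>G. \<nu> {} = 0"
  shows "value_axioms n G (shapley n)"
  unfolding value_axioms_def
proof (intro conjI ballI impI allI)
  fix \<nu> assume "\<nu> \<in> G"
  then show "(\<Sum>i\<in>{1..n}. shapley n \<nu> i) = \<nu> {1..n}"
    using assms shapley_efficient[of n \<nu>] by simp
next
  fix \<nu> :: "nat set \<Rightarrow> real" and i j
  assume "i \<in> {1..n}" "j \<in> {1..n}" "i \<noteq> j"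
    and symm: "\<forall>C. C \<subseteq> {1..n} - {i, j} \<longrightarrow> \<nu> (C \<union> {i}) = \<nu> (C \<union> {j})"
  from \<open>i \<in> {1..n}\<close> \<open>j \<in> {1..n}\<close> symm show "shapley n \<nu> i = shapley n \<nu> j"
    by (rule shapley_symmetric)
next
  fix \<nu> :: "nat set \<Rightarrow> real" and i
  assume "\<forall>C. C \<subseteq> {1..n} - {i} \<longrightarrow> \<nu> (C \<union> {i}) = \<nu> C"
  then show "shapley n \<nu> i = 0"
    by (rule shapley_dummy)
qed (rule shapley_add)

lemma additive_value_sum:
  fixes \<nu> :: "'e \<Rightarrow> 'p set \<Rightarrow> real" and \<psi> :: "('p set \<Rightarrow> real) \<Rightarrow> 'i \<Rightarrow> real"
  assumes additive: "\<forall>\<nu>1\<in>G. \<forall>\<nu>2\<in>G. \<psi> (\<lambda>S. \<nu>1 S + \<nu>2 S) i = \<psi> \<nu>1 i + \<psi> \<nu>2 i"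
    and "finite A" and closed: "\<And>F. F \<subseteq> A \<Longrightarrow> (\<lambda>S. \<Sum>e\<in>F. \<nu> e S) \<in> G"
  shows "\<psi> (\<lambda>S. \<Sum>e\<in>A. \<nu> e S) i = (\<Sum>e\<in>A. \<psi> (\<nu> e) i)"
  using \<open>finite A\<close> closed
proof (induction A rule: finite_induct)
  case empty
  let ?zero = "\<lambda>S::'p set. 0::real"
  have "?zero \<in> G"
    using empty.prems[of "{}"] by simp
  from additive[rule_format, OF this this] have "\<psi> ?zero i = 0"
    by simp
  then show ?case
    by simp
next
  case (insert a A)
  have "\<nu> a \<in> G" "(\<lambda>S. \<Sum>e\<in>A. \<nu> e S) \<in> G"
    using insert.prems[of "{a}"] insert.prems[of A] by auto
  moreover have "\<psi> (\<lambda>S. \<Sum>e\<in>A. \<nu> e S) i = (\<Sum>e\<in>A. \<psi> (\<nu> e) i)"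
    using insert.prems by (intro insert.IH) blast
  ultimately show ?case
    using additive insert.hyps by simp
qed

lemma value_axioms_hitting_game:
  assumes ax: "value_axioms n G \<psi>" and "\<nu> \<in> G" and D: "D \<subseteq> {1..n}" "D \<noteq> {}"
    and \<nu>: "\<And>S. S \<subseteq> {1..n} \<Longrightarrow> \<nu> S = (if S \<inter> D = {} then 0 else c)"
    and "i \<in> {1..n}"
  shows "\<psi> \<nu> i = (if i \<in> D then c / card D else 0)"
proof -
  from ax \<open>\<nu> \<in> G\<close> have efficient: "(\<Sum>k\<in>{1..n}. \<psi> \<nu> k) = \<nu> {1..n}"
    and symmetric: "\<And>k j. k \<in> {1..n} \<Longrightarrow> j \<in> {1..n} \<Longrightarrow> k \<noteq> j \<Longrightarrow>
      \<forall>C. C \<subseteq> {1..n} - {k, j} \<longrightarrow> \<nu> (C \<union> {k}) = \<nu> (C \<union> {j}) \<Longrightarrow> \<psi> \<nu> k = \<psi> \<nu> j"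
    and dummy: "\<And>k. k \<in> {1..n} \<Longrightarrow> \<forall>C. C \<subseteq> {1..n} - {k} \<longrightarrow> \<nu> (C \<union> {k}) = \<nu> C \<Longrightarrow> \<psi> \<nu> k = 0"
    unfolding value_axioms_def by simp_all
  have outside: "\<psi> \<nu> k = 0" if "k \<in> {1..n} - D" for k
  proof -
    have "\<nu> (C \<union> {k}) = \<nu> C" if "C \<subseteq> {1..n} - {k}" for C
    proof -
      have "C \<subseteq> {1..n}" "C \<union> {k} \<subseteq> {1..n}"
        using that \<open>k \<in> {1..n} - D\<close> by auto
      with \<open>k \<in> {1..n} - D\<close> show ?thesis
        by (simp add: \<nu> Int_Un_distrib2)
    qed
    with that show ?thesis
      by (intro dummy) auto
  qed
  have inside: "\<psi> \<nu> k = \<psi> \<nu> j" if "k \<in> D" "j \<in> D" for k j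
  proof -
    have "\<forall>C. C \<subseteq> {1..n} - {k, j} \<longrightarrow> \<nu> (C \<union> {k}) = \<nu> (C \<union> {j})"
    proof (intro allI impI)
      fix C assume "C \<subseteq> {1..n} - {k, j}"
      then have "C \<union> {k} \<subseteq> {1..n}" "C \<union> {j} \<subseteq> {1..n}"
        using that D by auto
      with that show "\<nu> (C \<union> {k}) = \<nu> (C \<union> {j})"
        by (auto simp: \<nu>)
    qed
    with that D show ?thesis
      by (cases "k = j") (simp_all add: symmetric subset_iff)
  qed
  obtain d where "d \<in> D"
    using D by blast
  have "c = \<nu> {1..n}"
    using D by (simp add: \<nu> Int_absorb1)
  also have "\<dots> = (\<Sum>k\<in>{1..n}. \<psi> \<nu> k)"
    by (rule efficient[symmetric])
  also have "\<dots> = (\<Sum>k\<in>D. \<psi> \<nu> k)"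
    using D outside by (intro sum.mono_neutral_right) auto
  also have "\<dots> = card D * \<psi> \<nu> d"
    using inside[OF _ \<open>d \<in> D\<close>] by simp
  finally have "\<psi> \<nu> d = c / card D"
    using D finite_subset[OF D(1)] by (simp add: field_simps)
  then show ?thesis
    using outside inside[OF _ \<open>d \<in> D\<close>] \<open>i \<in> {1..n}\<close> by auto
qed

lemma rooted_tree_depth_parent_less:
  assumes "rooted_tree V r par" "c \<in> V" "c \<noteq> r"
  shows "(LEAST k. (par ^^ k) (par c) = r) < (LEAST k. (par ^^ k) c = r)"
proof -
  define m where "m = (LEAST k. (par ^^ k) c = r)"
  have "\<exists>k. (par ^^ k) c = r"
    using assms(1,2) by (simp add: rooted_tree_def)
  then have "(par ^^ m) c = r"
    unfolding m_def by (rule LeastI_ex)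
  with \<open>c \<noteq> r\<close> obtain k where "m = Suc k"
    by (cases m) auto
  with \<open>(par ^^ m) c = r\<close> have "(par ^^ k) (par c) = r"
    by (simp add: funpow_Suc_right del: funpow.simps)
  then have "(LEAST k. (par ^^ k) (par c) = r) \<le> k"
    by (rule Least_le)
  with \<open>m = Suc k\<close> show ?thesis
    by (simp add: m_def)
qed

lemma rooted_tree_exists_leaf_below:
  assumes tree: "rooted_tree V r par" and "v \<in> V"
  shows "\<exists>w \<in> tree_leaves V r par. is_anc par v w"
proof -
  define depth where "depth w = (LEAST k. (par ^^ k) w = r)" for w
  define A where "A = {w \<in> V. is_anc par v w}"
  have "finite A"
    using tree by (simp add: A_def rooted_tree_def)
  moreover have "v \<in> A"
    using \<open>v \<in> V\<close> by (auto simp: A_def is_anc_def intro: exI[of _ 0])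
  ultimately obtain w where "w \<in> A" and deepest: "\<And>x. x \<in> A \<Longrightarrow> depth x \<le> depth w"
    using Max_ge Max_in[of "depth ` A"] by (metis empty_iff finite_imageI image_iff)
  have "children V r par w = {}"
  proof (rule ccontr)
    assume "children V r par w \<noteq> {}"
    then obtain c where c: "c \<in> V" "c \<noteq> r" "par c = w"
      by (auto simp: children_def)
    from \<open>w \<in> A\<close> obtain j where "(par ^^ j) w = v"
      by (auto simp: A_def is_anc_def)
    with c have "(par ^^ Suc j) c = v"
      by (simp add: funpow_Suc_right del: funpow.simps)
    with c have "c \<in> A"
      unfolding A_def is_anc_def by blast
    then have "depth c \<le> depth w"
      by (rule deepest)
    moreover have "depth w < depth c"
      using rooted_tree_depth_parent_less[OF tree c(1,2)] c(3) by (simp add: depth_def)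
    ultimately show False
      by simp
  qed
  with \<open>w \<in> A\<close> show ?thesis
    by (auto simp: A_def tree_leaves_def)
qed

lemma PD_empty [simp]: "PD V r par l {} = 0"
  by (simp add: PD_def)

lemma PD_sum: "PD V r par (\<lambda>x. \<Sum>e\<in>F. f e x) S = (\<Sum>e\<in>F. PD V r par (f e) S)"
  unfolding PD_def by (rule sum.swap)

lemma PD_in_PD_games: "\<forall>e\<in>tree_edges V r. l e \<ge> 0 \<Longrightarrow> PD V r par l \<in> PD_games V r par"
  by (auto simp: PD_games_def)

lemma PD_cong:
  assumes "\<And>e. e \<in> tree_edges V r \<Longrightarrow> l1 e = l2 e"
  shows "PD V r par l1 = PD V r par l2"
  using assms by (intro ext sum.cong) (auto simp: PD_def root_path_def)

lemma PD_single_edge: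
  assumes "finite V" and "e \<in> tree_edges V r"
  shows "PD V r par (\<lambda>x. if x = e then c else 0) S = (if \<exists>i\<in>S. is_anc par e i then c else 0)"
proof -
  have "finite (\<Union>i\<in>S. root_path V r par i)"
    using assms(1) by (rule finite_subset[rotated]) (auto simp: root_path_def tree_edges_def)
  with assms(2) show ?thesis
    by (auto simp: PD_def root_path_def)
qed

lemma PD_eq_sum_single_edges:
  assumes "finite V"
  shows "PD V r par l = (\<lambda>S. \<Sum>e\<in>tree_edges V r. PD V r par (\<lambda>x. if x = e then l e else 0) S)"
proof -
  have "finite (tree_edges V r)"
    using assms by (simp add: tree_edges_def)
  then have "PD V r par l = PD V r par (\<lambda>x. \<Sum>e\<in>tree_edges V r. if x = e then l e else 0)"
    by (intro PD_cong) simp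
  also have "\<dots> = (\<lambda>S. \<Sum>e\<in>tree_edges V r. PD V r par (\<lambda>x. if x = e then l e else 0) S)"
    by (rule ext) (rule PD_sum)
  finally show ?thesis .
qed

lemma value_axioms_PD_sum_single_edges:
  assumes "finite V" and ax: "value_axioms n (PD_games V r par) \<psi>"
    and l: "\<forall>e \<in> tree_edges V r. l e \<ge> 0" and "i \<in> {1..n}"
  shows "\<psi> (PD V r par l) i = (\<Sum>e\<in>tree_edges V r. \<psi> (PD V r par (\<lambda>x. if x = e then l e else 0)) i)"
proof -
  let ?E = "tree_edges V r" and ?G = "PD_games V r par"
  define edge_game where "edge_game e = PD V r par (\<lambda>x. if x = e then l e else 0)" for e
  have "finite ?E"
    using \<open>finite V\<close> by (simp add: tree_edges_def)
  have "PD V r par l = (\<lambda>S. \<Sum>e\<in>?E. edge_game e S)"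
    unfolding edge_game_def by (rule PD_eq_sum_single_edges[OF \<open>finite V\<close>])
  then have "\<psi> (PD V r par l) i = \<psi> (\<lambda>S. \<Sum>e\<in>?E. edge_game e S) i"
    by (simp only:)
  also have "\<dots> = (\<Sum>e\<in>?E. \<psi> (edge_game e) i)"
  proof (rule additive_value_sum[where \<psi>=\<psi> and \<nu>=edge_game, OF _ \<open>finite ?E\<close>])
    show "\<forall>\<nu>1\<in>?G. \<forall>\<nu>2\<in>?G. \<psi> (\<lambda>S. \<nu>1 S + \<nu>2 S) i = \<psi> \<nu>1 i + \<psi> \<nu>2 i"
      using ax \<open>i \<in> {1..n}\<close> by (simp add: value_axioms_def)
    fix F assume "F \<subseteq> ?E"
    have "(\<lambda>S. \<Sum>e\<in>F. edge_game e S) = PD V r par (\<lambda>x. \<Sum>e\<in>F. if x = e then l e else 0)"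
      by (simp add: edge_game_def fun_eq_iff PD_sum)
    moreover have "\<forall>x\<in>?E. (\<Sum>e\<in>F. if x = e then l e else 0) \<ge> 0"
      using l by (auto intro!: sum_nonneg)
    ultimately show "(\<lambda>S. \<Sum>e\<in>F. edge_game e S) \<in> ?G"
      by (simp add: PD_in_PD_games)
  qed
  finally show ?thesis
    by (simp add: edge_game_def)
qed

lemma value_axioms_PD_single_edge:
  assumes tree: "phylo_tree V r par n" and ax: "value_axioms n (PD_games V r par) \<psi>"
    and e: "e \<in> tree_edges V r" and "c \<ge> 0" and i: "i \<in> {1..n}"
  shows "\<psi> (PD V r par (\<lambda>x. if x = e then c else 0)) i
       = (if is_anc par e i then c / real (n_desc V r par e) else 0)"
proof -
  define below where "below = {j \<in> tree_leaves V r par. is_anc par e j}"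
  have rooted: "rooted_tree V r par" and leaves: "tree_leaves V r par = {1..n}"
    using tree by (simp_all add: phylo_tree_def)
  then have "finite V"
    by (simp add: rooted_tree_def)
  have game: "PD V r par (\<lambda>x. if x = e then c else 0) \<in> PD_games V r par"
    using \<open>c \<ge> 0\<close> by (intro PD_in_PD_games) simp
  have sub: "below \<subseteq> {1..n}"
    unfolding below_def leaves[symmetric] by blast
  have "e \<in> V"
    using e by (simp add: tree_edges_def)
  then have nonempty: "below \<noteq> {}"
    using rooted_tree_exists_leaf_below[OF rooted] by (auto simp: below_def)
  have hitting: "PD V r par (\<lambda>x. if x = e then c else 0) S = (if S \<inter> below = {} then 0 else c)"
    if "S \<subseteq> {1..n}" for S
  proof -
    have "(\<exists>j\<in>S. is_anc par e j) \<longleftrightarrow> S \<inter> below \<noteq> {}"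
      using that leaves unfolding below_def by blast
    then show ?thesis
      by (simp add: PD_single_edge[OF \<open>finite V\<close> e])
  qed
  have "i \<in> below \<longleftrightarrow> is_anc par e i" "card below = n_desc V r par e"
    using i leaves by (auto simp: below_def n_desc_def)
  with value_axioms_hitting_game[OF ax game sub nonempty hitting i] show ?thesis
    by simp
qed

lemma value_axioms_PD_eq_fair_proportion:
  assumes tree: "phylo_tree V r par n" and ax: "value_axioms n (PD_games V r par) \<psi>"
    and l: "\<forall>e \<in> tree_edges V r. l e \<ge> 0" and i: "i \<in> {1..n}"
  shows "\<psi> (PD V r par l) i = (\<Sum>e \<in> root_path V r par i. l e / real (n_desc V r par e))"
proof -
  have "finite V"
    using tree by (simp add: phylo_tree_def rooted_tree_def)
  then have "finite (tree_edges V r)"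
    by (simp add: tree_edges_def)
  have "\<psi> (PD V r par l) i
      = (\<Sum>e\<in>tree_edges V r. if is_anc par e i then l e / real (n_desc V r par e) else 0)"
    unfolding value_axioms_PD_sum_single_edges[OF \<open>finite V\<close> ax l i]
    using l by (intro sum.cong refl value_axioms_PD_single_edge[OF tree ax _ _ i]) auto
  also have "\<dots> = (\<Sum>e \<in> root_path V r par i. l e / real (n_desc V r par e))"
    using \<open>finite (tree_edges V r)\<close> by (simp add: sum.inter_filter root_path_def)
  finally show ?thesis .
qed

theorem theorem7:
  fixes V :: "nat set" and r :: nat and par :: "nat \<Rightarrow> nat" and n :: nat
  assumes "phylo_tree V r par n"
  shows "(\<exists>\<psi>. value_axioms n (PD_games V r par) \<psi>)
    \<and> (\<forall>\<psi>. value_axioms n (PD_games V r par) \<psi> \<longrightarrow>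
          (\<forall>\<nu>\<in>PD_games V r par. \<forall>i\<in>{1..n}. \<psi> \<nu> i = shapley n \<nu> i))
    \<and> value_axioms n (PD_games V r par) (shapley n)
    \<and> (\<forall>l. (\<forall>e \<in> tree_edges V r. l e \<ge> 0) \<longrightarrow> (\<forall>i\<in>{1..n}.
          shapley n (PD V r par l) i = (\<Sum>e \<in> root_path V r par i. l e / real (n_desc V r par e))))"
proof -
  have shapley: "value_axioms n (PD_games V r par) (shapley n)"
    by (rule shapley_value_axioms) (auto simp: PD_games_def)
  have unique: "\<psi> \<nu> i = shapley n \<nu> i"
    if "value_axioms n (PD_games V r par) \<psi>" "\<nu> \<in> PD_games V r par" "i \<in> {1..n}" for \<psi> \<nu> i
  proof -
    from \<open>\<nu> \<in> PD_games V r par\<close> obtain l where "\<forall>e\<in>tree_edges V r. l e \<ge> 0" "\<nu> = PD V r par l"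
      by (auto simp: PD_games_def)
    with that shapley show ?thesis
      by (simp add: value_axioms_PD_eq_fair_proportion[OF assms])
  qed
  show ?thesis
    using shapley unique value_axioms_PD_eq_fair_proportion[OF assms shapley] by blast
qed

end
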